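(* Let $\varepsilon>0$ and let $f:\{0,1\}^n\to\{0,1\}$ be a symmetric function with $\mathrm{bias}(f)\ge\varepsilon$. Draw $x_1,\dots,x_n$ independently and uniformly from $\{0,1\}$, and let $\tau^{(0)}$ be the smallest $t$ such that the restriction of $f$ obtained by fixing the first $t$ variables to $x_1,\dots,x_t$ is a constant function. Then $\mathbb{E}[\tau^{(0)}]\ge\Omega\!\left(\frac{n}{\log(1/\varepsilon)}\right)$, with an absolute implied constant.
   Context: $f$ is symmetric if $f(x)=f(y)$ whenever $x,y$ have the same number of ones. $\mathrm{bias}(f)=\min\{\Pr_{x}[f(x)\ne0],\Pr_x[f(x)\ne1]\}$ for uniform $x\in\{0,1\}^n$. *)

theory Defs
  imports Complex_Main
begin

text \<open>Points of {0,1}^n are boolean lists of length n (False = 0, True = 1);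
  a Boolean function f : {0,1}^n -> {0,1} is a map bool list => bool, considered on cube n.\<close>

definition cube :: "nat \<Rightarrow> bool list set" where
  "cube n = {xs. length xs = n}"

definition symmetric_fun :: "nat \<Rightarrow> (bool list \<Rightarrow> bool) \<Rightarrow> bool" where
  "symmetric_fun n f \<longleftrightarrow>
     (\<forall>x\<in>cube n. \<forall>y\<in>cube n. count_list x True = count_list y True \<longrightarrow> f x = f y)"

definition prob_cube :: "nat \<Rightarrow> (bool list \<Rightarrow> bool) \<Rightarrow> real" where
  "prob_cube n P = real (card {x\<in>cube n. P x}) / 2 ^ n"

definition bias :: "nat \<Rightarrow> (bool list \<Rightarrow> bool) \<Rightarrow> real" where
  "bias n f = min (prob_cube n (\<lambda>x. f x \<noteq> False)) (prob_cube n (\<lambda>x. f x \<noteq> True))"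

definition restriction_constant :: "nat \<Rightarrow> (bool list \<Rightarrow> bool) \<Rightarrow> bool list \<Rightarrow> nat \<Rightarrow> bool" where
  "restriction_constant n f x t \<longleftrightarrow>
     (\<forall>y\<in>cube (n - t). \<forall>z\<in>cube (n - t). f (take t x @ y) = f (take t x @ z))"

definition tau0 :: "nat \<Rightarrow> (bool list \<Rightarrow> bool) \<Rightarrow> bool list \<Rightarrow> nat" where
  "tau0 n f x = (LEAST t. restriction_constant n f x t)"

definition expected_tau0 :: "nat \<Rightarrow> (bool list \<Rightarrow> bool) \<Rightarrow> real" where
  "expected_tau0 n f = (\<Sum>x\<in>cube n. real (tau0 n f x)) / 2 ^ n"

end

theory Submission
  imports Defs
begin

text \<open>A symmetric f is a function of the Hamming weight, f x = g |x|. Put d = n div 10.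
  If g changes value between two consecutive weights k, k + 1 in [d, n - d], then fixing at
  most d coordinates never makes f constant, since the free coordinates can still realise both
  weights; hence tau0 > d on every input and E[tau0] > n/10.
  Otherwise g is constant on [d, n - d], so f deviates from a constant only on inputs with
  fewer than d ones or fewer than d zeros. By the generating-function bound
  #{x : |x| < d} <= 2^d (3/2)^n this forces \<epsilon> <= bias f <= 2^(d+1) (3/4)^n, i.e.
  ln (1/\<epsilon>) >= n ln (4/3) - (d + 1) ln 2 = \<Omega>(n), while E[tau0] >= 1 because f is not constant.\<close>

lemma count_list_replicate: "count_list (replicate n x) y = (if x = y then n else 0)"
  by (induction n) auto

lemma count_list_True_add_False: "count_list xs True + count_list xs False = length xs"
  by (induction xs) auto

lemma cube_Suc: "cube (Suc n) = (Cons True) ` cube n \<union> (Cons False) ` cube n"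
proof
  show "cube (Suc n) \<subseteq> (Cons True) ` cube n \<union> (Cons False) ` cube n"
  proof
    fix x assume "x \<in> cube (Suc n)"
    then obtain a y where "x = a # y" "length y = n"
      unfolding cube_def by (cases x) auto
    then show "x \<in> (Cons True) ` cube n \<union> (Cons False) ` cube n"
      unfolding cube_def by (cases a) auto
  qed
qed (auto simp: cube_def)

lemma finite_cube: "finite (cube n)"
  by (induction n) (auto simp: cube_Suc, simp add: cube_def)

lemma sum_cube_power_count_list:
  "(\<Sum>x\<in>cube n. r ^ count_list x b) = (1 + r) ^ n" for r :: "'a :: comm_semiring_1"
proof (induction n)
  case 0
  have "cube 0 = {[]}" by (auto simp: cube_def)
  then show ?case by simp
next
  case (Suc n)
  have "(\<Sum>x\<in>cube (Suc n). r ^ count_list x b)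
      = (\<Sum>x\<in>cube n. r ^ count_list (True # x) b) + (\<Sum>x\<in>cube n. r ^ count_list (False # x) b)"
    unfolding cube_Suc
    by (subst sum.union_disjoint) (auto simp: finite_cube sum.reindex)
  also have "\<dots> = (1 + r) * (\<Sum>x\<in>cube n. r ^ count_list x b)"
    by (cases b) (simp_all add: sum_distrib_left algebra_simps sum.distrib)
  finally show ?case using Suc by simp
qed

lemma card_cube: "card (cube n) = 2 ^ n"
  using sum_cube_power_count_list[where r="1 :: nat" and n=n and b=True] by (simp add: numeral_2_eq_2)

lemma card_cube_count_list_less:
  fixes r :: real
  assumes "0 < r" "r \<le> 1"
  shows "card {x\<in>cube n. count_list x b < d} * r ^ d \<le> (1 + r) ^ n"
proof -
  let ?S = "{x\<in>cube n. count_list x b < d}"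
  have "card ?S * r ^ d = (\<Sum>x\<in>?S. r ^ d)" by simp
  also have "\<dots> \<le> (\<Sum>x\<in>?S. r ^ count_list x b)"
    using assms by (intro sum_mono power_decreasing) auto
  also have "\<dots> \<le> (\<Sum>x\<in>cube n. r ^ count_list x b)"
    using assms by (intro sum_mono2) (auto simp: finite_cube)
  finally show ?thesis by (simp add: sum_cube_power_count_list)
qed

lemma prob_cube_add_prob_cube_not: "prob_cube n P + prob_cube n (\<lambda>x. \<not> P x) = 1"
proof -
  have "card {x\<in>cube n. P x} + card {x\<in>cube n. \<not> P x} = card (cube n)"
    by (subst card_Un_disjoint[symmetric]) (auto simp: finite_cube intro: arg_cong[where f=card])
  then show ?thesis
    unfolding prob_cube_def card_cube by (simp add: field_simps flip: of_nat_add)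
qed

lemma bias_le_half: "bias n f \<le> 1/2"
  using prob_cube_add_prob_cube_not[of n f] unfolding bias_def by simp

lemma not_restriction_constant_0_if_bias_pos:
  assumes "0 < bias n f"
  shows "\<not> restriction_constant n f x 0"
proof -
  have "0 < prob_cube n f" "0 < prob_cube n (\<lambda>z. \<not> f z)"
    using assms unfolding bias_def by auto
  then have "{y\<in>cube n. f y} \<noteq> {}" "{z\<in>cube n. \<not> f z} \<noteq> {}"
    unfolding prob_cube_def by (auto simp del: Collect_empty_eq)
  then show ?thesis
    unfolding restriction_constant_def by auto
qed

definition weight_profile :: "nat \<Rightarrow> (bool list \<Rightarrow> bool) \<Rightarrow> nat \<Rightarrow> bool" where
  "weight_profile n f j = f (replicate j True @ replicate (n - j) False)"

lemma symmetric_fun_eq_weight_profile: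
  assumes "symmetric_fun n f" "x \<in> cube n"
  shows "f x = weight_profile n f (count_list x True)"
proof -
  let ?j = "count_list x True"
  have "?j \<le> n"
    using assms(2) count_le_length[of x True] by (simp add: cube_def)
  then have "replicate ?j True @ replicate (n - ?j) False \<in> cube n"
    by (simp add: cube_def)
  moreover have "count_list (replicate ?j True @ replicate (n - ?j) False) True = ?j"
    by (simp add: count_list_replicate)
  ultimately show ?thesis
    using assms unfolding symmetric_fun_def weight_profile_def by metis
qed

lemma not_restriction_constant_if_weight_profile_changes:
  assumes "symmetric_fun n f" "x \<in> cube n"
    and "weight_profile n f k \<noteq> weight_profile n f (k + 1)" "t \<le> k" "t + k + 1 \<le> n"
  shows "\<not> restriction_constant n f x t"
proof
  assume const: "restriction_constant n f x t"
  define w where "w = count_list (take t x) True"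
  have length_take: "length (take t x) = t"
    using assms(2,4,5) by (simp add: cube_def)
  then have "w \<le> t"
    unfolding w_def using count_le_length[of "take t x" True] by simp
  define completion where
    "completion j = replicate (j - w) True @ replicate (n - t - (j - w)) False" for j
  have completion_cube: "completion j \<in> cube (n - t)" if "w \<le> j" "j \<le> n - t + w" for j
    using that by (simp add: completion_def cube_def)
  have completion_weight: "count_list (take t x @ completion j) True = j" if "w \<le> j" for j
    using that by (simp add: completion_def count_list_replicate w_def)
  have profile: "f (take t x @ completion j) = weight_profile n f j"
    if "w \<le> j" "j \<le> n - t + w" for j
  proof -
    have "take t x @ completion j \<in> cube n"
      using completion_cube[OF that] length_take assms(5) by (simp add: cube_def)
    then show ?thesis
      using symmetric_fun_eq_weight_profile[OF assms(1)] completion_weight[OF that(1)] by simp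
  qed
  have "w \<le> k" "k + 1 \<le> n - t + w"
    using \<open>w \<le> t\<close> assms(4,5) by linarith+
  then have "f (take t x @ completion k) = f (take t x @ completion (k + 1))"
    using const completion_cube[of k] completion_cube[of "k + 1"]
    unfolding restriction_constant_def by simp
  with assms(3) show False
    using profile[of k] profile[of "k + 1"] \<open>w \<le> k\<close> \<open>k + 1 \<le> n - t + w\<close> by simp
qed

lemma less_tau0_if_not_restriction_constant:
  assumes "x \<in> cube n" "\<And>t. t \<le> d \<Longrightarrow> \<not> restriction_constant n f x t"
  shows "d < tau0 n f x"
proof -
  have "restriction_constant n f x n"
    using assms(1) by (simp add: restriction_constant_def cube_def)
  then have "restriction_constant n f x (tau0 n f x)"
    unfolding tau0_def by (rule LeastI)
  then show ?thesis
    using assms(2) not_le by blast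
qed

lemma expected_tau0_ge:
  assumes "\<And>x. x \<in> cube n \<Longrightarrow> D \<le> tau0 n f x"
  shows "real D \<le> expected_tau0 n f"
proof -
  have "2 ^ n * real D = (\<Sum>x\<in>cube n. real D)"
    by (simp add: card_cube)
  also have "\<dots> \<le> (\<Sum>x\<in>cube n. real (tau0 n f x))"
    using assms by (intro sum_mono) auto
  finally show ?thesis
    unfolding expected_tau0_def by (simp add: field_simps)
qed

lemma expected_tau0_ge_1_if_bias_pos:
  assumes "0 < bias n f"
  shows "1 \<le> expected_tau0 n f"
proof -
  have "0 < tau0 n f x" if "x \<in> cube n" for x
    using that not_restriction_constant_0_if_bias_pos[OF assms]
    by (intro less_tau0_if_not_restriction_constant) auto
  then show ?thesis
    using expected_tau0_ge[of n 1 f] by (simp add: Suc_le_eq)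
qed

lemma expected_tau0_ge_if_weight_profile_changes:
  assumes "symmetric_fun n f" "d \<le> k" "k + 1 \<le> n - d"
    and "weight_profile n f k \<noteq> weight_profile n f (k + 1)"
  shows "real (d + 1) \<le> expected_tau0 n f"
proof -
  have "d < tau0 n f x" if "x \<in> cube n" for x
    using that assms not_restriction_constant_if_weight_profile_changes[OF assms(1) that assms(4)]
    by (intro less_tau0_if_not_restriction_constant) auto
  then show ?thesis
    using expected_tau0_ge[of n "d + 1" f] by (simp add: Suc_le_eq)
qed

lemma bias_le_if_weight_profile_stable:
  assumes "symmetric_fun n f"
    and stable: "\<And>k. d \<le> k \<Longrightarrow> k + 1 \<le> n - d \<Longrightarrow> weight_profile n f k = weight_profile n f (k + 1)"
  shows "bias n f \<le> 2 ^ (d + 1) * (3/4) ^ n"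
proof -
  define c where "c = weight_profile n f d"
  have profile_const: "weight_profile n f j = c" if "d \<le> j" "j \<le> n - d" for j
    using that unfolding c_def
    by (induction j rule: dec_induct) (use stable in fastforce)+
  let ?few = "\<lambda>b. {x\<in>cube n. count_list x b < d}"
  have "{x\<in>cube n. f x \<noteq> c} \<subseteq> ?few True \<union> ?few False"
  proof
    fix x assume "x \<in> {x\<in>cube n. f x \<noteq> c}"
    then have x: "x \<in> cube n" "f x \<noteq> c" by auto
    have "count_list x True + count_list x False = n"
      using x(1) count_list_True_add_False[of x] by (simp add: cube_def)
    moreover have "\<not> (d \<le> count_list x True \<and> count_list x True \<le> n - d)"
      using x profile_const symmetric_fun_eq_weight_profile[OF assms(1) x(1)] by metis
    ultimately show "x \<in> ?few True \<union> ?few False"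
      using x(1) by auto
  qed
  then have "card {x\<in>cube n. f x \<noteq> c} \<le> card (?few True \<union> ?few False)"
    using finite_cube[of n] by (intro card_mono) auto
  also have "\<dots> \<le> card (?few True) + card (?few False)"
    by (rule card_Un_le)
  finally have "real (card {x\<in>cube n. f x \<noteq> c}) \<le> real (card (?few True)) + real (card (?few False))"
    by (simp flip: of_nat_add)
  moreover have few_bound: "real (card (?few b)) \<le> 2 ^ d * (3/2) ^ n" for b
    using card_cube_count_list_less[of "1/2" n b d] by (simp add: field_simps)
  ultimately have "real (card {x\<in>cube n. f x \<noteq> c}) \<le> 2 * (2 ^ d * (3/2) ^ n)"
    using few_bound[of True] few_bound[of False] by linarith
  then have "prob_cube n (\<lambda>x. f x \<noteq> c) \<le> 2 * (2 ^ d * (3/2) ^ n) / 2 ^ n"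
    unfolding prob_cube_def by (simp add: divide_right_mono)
  also have "\<dots> = 2 ^ (d + 1) * (3/4) ^ n"
    using power_divide[of "3/2 :: real" 2 n] by simp
  finally show ?thesis
    unfolding bias_def by (cases c) auto
qed

lemma ln_inverse_ge_if_le_pow_bound:
  fixes \<epsilon> :: real
  assumes "0 < \<epsilon>" "\<epsilon> \<le> 2 ^ (d + 1) * (3/4) ^ n"
  shows "real n / 4 - real (d + 1) \<le> ln (1 / \<epsilon>)"
proof -
  have "ln (2 ^ (d + 1) * (3/4) ^ n) = real (d + 1) * ln 2 - real n * ln (4/3)"
    by (simp add: ln_mult ln_realpow ln_div algebra_simps del: power_Suc)
  moreover have "1/4 \<le> ln (4/3 :: real)"
    using ln_le_minus_one[of "3/4 :: real"] by (simp add: ln_div)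
  then have "real n / 4 \<le> real n * ln (4/3)"
    using mult_left_mono[of "1/4" "ln (4/3)" "real n"] by simp
  moreover have "real (d + 1) * ln 2 \<le> real (d + 1)"
    using ln_2_less_1 by (simp add: mult_left_le)
  moreover have "ln (1 / \<epsilon>) \<ge> - ln (2 ^ (d + 1) * (3/4) ^ n)"
    using assms by (simp add: ln_div)
  ultimately show ?thesis
    by linarith
qed

lemma ln_inverse_ge_half:
  fixes \<epsilon> :: real
  assumes "0 < \<epsilon>" "\<epsilon> \<le> bias n f"
  shows "1/2 \<le> ln (1 / \<epsilon>)"
proof -
  have "ln 2 \<le> ln (1 / \<epsilon>)"
    using assms bias_le_half[of n f] by (simp add: field_simps)
  then show ?thesis
    using ln_le_minus_one[of "1/2 :: real"] by (simp add: ln_div)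
qed

lemma expected_tau0_mult_ln_inverse_ge:
  fixes \<epsilon> :: real
  assumes "0 < \<epsilon>" "symmetric_fun n f" "\<epsilon> \<le> bias n f"
  shows "real n / 20 \<le> expected_tau0 n f * ln (1 / \<epsilon>)"
proof -
  have ln_ge_half: "1/2 \<le> ln (1 / \<epsilon>)"
    using assms(1,3) by (rule ln_inverse_ge_half)
  define d where "d = n div 10"
  have "10 * d \<le> n" "n < 10 * (d + 1)"
    unfolding d_def by presburger+
  then have d_bounds: "10 * real d \<le> real n" "real n < 10 * real d + 10"
    by (simp_all flip: of_nat_le_iff of_nat_less_iff)
  show ?thesis
  proof (cases "\<exists>k. d \<le> k \<and> k + 1 \<le> n - d \<and> weight_profile n f k \<noteq> weight_profile n f (k + 1)")
    case True
    then have "real (d + 1) \<le> expected_tau0 n f"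
      using expected_tau0_ge_if_weight_profile_changes[OF assms(2)] by blast
    then have "real n / 10 * (1/2) \<le> expected_tau0 n f * ln (1 / \<epsilon>)"
      using d_bounds ln_ge_half by (intro mult_mono) auto
    then show ?thesis
      by simp
  next
    case False
    then have "bias n f \<le> 2 ^ (d + 1) * (3/4) ^ n"
      by (intro bias_le_if_weight_profile_stable[OF assms(2)]) blast
    then have "real n / 4 - real (d + 1) \<le> ln (1 / \<epsilon>)"
      using assms(1,3) by (meson ln_inverse_ge_if_le_pow_bound order_trans)
    then have "real n / 20 \<le> ln (1 / \<epsilon>)"
      using ln_ge_half d_bounds by linarith
    moreover have "1 \<le> expected_tau0 n f"
      using assms(1,3) by (intro expected_tau0_ge_1_if_bias_pos) linarith
    then have "ln (1 / \<epsilon>) \<le> expected_tau0 n f * ln (1 / \<epsilon>)"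
      using ln_ge_half by (simp add: mult_le_cancel_right1)
    ultimately show ?thesis
      by linarith
  qed
qed

theorem mainTheorem7:
  shows "\<exists>c>0. \<forall>(\<epsilon>::real) (n::nat) (f::bool list \<Rightarrow> bool).
           \<epsilon> > 0 \<longrightarrow> symmetric_fun n f \<longrightarrow> bias n f \<ge> \<epsilon> \<longrightarrow>
           expected_tau0 n f \<ge> c * real n / ln (1 / \<epsilon>)"
proof (intro exI[of _ "1/20"] conjI allI impI)
  fix \<epsilon> :: real and n f
  assume "\<epsilon> > 0" "symmetric_fun n f" "bias n f \<ge> \<epsilon>"
  then have "1/2 \<le> ln (1 / \<epsilon>)" "real n / 20 \<le> expected_tau0 n f * ln (1 / \<epsilon>)"
    using ln_inverse_ge_half expected_tau0_mult_ln_inverse_ge by blast+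
  then show "1/20 * real n / ln (1 / \<epsilon>) \<le> expected_tau0 n f"
    by (simp add: divide_le_eq)
qed simp

end
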